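(* Let $(a(n))_{n\in\mathbb N_0}$ be a real sequence and for $\lambda>0$ let $N_\lambda$ be Poisson distributed with mean $\lambda$. If $a(n+1)-a(n)=O(\sqrt n)$ as $n\to\infty$, then $|a(n)-\mathbb E[a(N_n)]|=O(n)$ as $n\to\infty$. *)

theory Defs
  imports "HOL-Probability.Probability" "HOL-Library.Landau_Symbols"
begin

end

theory Submission
  imports Defs
begin

text \<open>
  Outside an initial segment the increments are at most \<open>c \<surd>m\<close>, so globally
  \<open>\<bar>a (m + 1) - a m\<bar> \<le> K (\<surd>m + 1)\<close>. Telescoping and AM-GM turn this into the quadratic
  envelope \<open>\<bar>a k - a n\<bar> \<le> K ((k - n)\<^sup>2 + k + n + 1)\<close>. For \<open>N\<close> Poisson with mean \<open>n\<close>
  the envelope has expectation \<open>K (Var N + E N + n + 1) = K (3n + 1)\<close>, which bounds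
  \<open>\<bar>a n - E a(N)\<bar> \<le> E \<bar>a N - a n\<bar>\<close>.
\<close>

lemma poisson_pmf_sums_1:
  assumes "r > 0"
  shows "(\<lambda>k. pmf (poisson_pmf r) k) sums 1"
proof -
  have "(\<lambda>k. r ^ k /\<^sub>R fact k * exp (-r)) sums (exp r * exp (-r))"
    by (rule sums_mult2[OF exp_converges])
  then show ?thesis
    using assms by (simp add: exp_minus field_simps)
qed

lemma poisson_pmf_Suc:
  assumes "r > 0"
  shows "pmf (poisson_pmf r) (Suc k) * real (Suc k) = r * pmf (poisson_pmf r) k"
  using assms by (simp add: fact_Suc field_simps del: of_nat_Suc)

lemma poisson_pmf_Stein_sums:
  assumes "r > 0" and "(\<lambda>k. pmf (poisson_pmf r) k * g (Suc k)) sums s"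
  shows "(\<lambda>k. pmf (poisson_pmf r) k * (real k * g k)) sums (r * s)"
proof -
  have "(\<lambda>k. r * (pmf (poisson_pmf r) k * g (Suc k))) sums (r * s)"
    by (rule sums_mult[OF assms(2)])
  also have "(\<lambda>k. r * (pmf (poisson_pmf r) k * g (Suc k))) =
             (\<lambda>k. pmf (poisson_pmf r) (Suc k) * (real (Suc k) * g (Suc k)))"
    using poisson_pmf_Suc[OF assms(1)] by (simp add: fun_eq_iff mult.assoc [symmetric])
  finally show ?thesis
    by (subst (asm) sums_Suc_iff) simp
qed

lemma poisson_pmf_mean_sums:
  assumes "r > 0"
  shows "(\<lambda>k. pmf (poisson_pmf r) k * real k) sums r"
  using poisson_pmf_Stein_sums[OF assms, of "\<lambda>_. 1" 1] poisson_pmf_sums_1[OF assms] by simp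

lemma poisson_pmf_variance_sums:
  assumes "r > 0"
  shows "(\<lambda>k. pmf (poisson_pmf r) k * (real k - r)\<^sup>2) sums r"
proof -
  note sums_1 = poisson_pmf_sums_1[OF assms] and mean = poisson_pmf_mean_sums[OF assms]
  have "(\<lambda>k. pmf (poisson_pmf r) k * real (Suc k)) sums (r + 1)"
    using sums_add[OF mean sums_1] by (simp add: algebra_simps)
  then have second: "(\<lambda>k. pmf (poisson_pmf r) k * (real k * real k)) sums (r * (r + 1))"
    by (rule poisson_pmf_Stein_sums[OF assms])
  have "(\<lambda>k. pmf (poisson_pmf r) k * (real k * real k) - 2 * r * (pmf (poisson_pmf r) k * real k)
          + r\<^sup>2 * pmf (poisson_pmf r) k) sums (r * (r + 1) - 2 * r * r + r\<^sup>2 * 1)"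
    by (intro sums_add sums_diff sums_mult second mean sums_1)
  then show ?thesis
    by (simp add: power2_eq_square algebra_simps)
qed

lemma integrable_measure_pmf_nat_iff:
  fixes p :: "nat pmf" and f :: "nat \<Rightarrow> real"
  shows "integrable (measure_pmf p) f \<longleftrightarrow> summable (\<lambda>k. pmf p k * \<bar>f k\<bar>)"
  unfolding measure_pmf_eq_density
  by (subst integrable_density) (auto simp: integrable_count_space_nat_iff abs_mult)

lemma sums_expectation_measure_pmf_nat:
  fixes p :: "nat pmf" and f :: "nat \<Rightarrow> real"
  assumes "integrable (measure_pmf p) f"
  shows "(\<lambda>k. pmf p k * f k) sums measure_pmf.expectation p f"
proof -
  have "integrable (count_space UNIV) (\<lambda>k. pmf p k *\<^sub>R f k)"
    using assms unfolding measure_pmf_eq_density by (subst (asm) integrable_density) auto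
  from sums_integral_count_space_nat[OF this] show ?thesis
    unfolding measure_pmf_eq_density by (subst integral_density) auto
qed

lemma abs_expectation_diff_le:
  fixes p :: "nat pmf" and a g :: "nat \<Rightarrow> real"
  assumes bound: "\<And>k. \<bar>a k - a n\<bar> \<le> g k"
    and sums: "(\<lambda>k. pmf p k * g k) sums G"
  shows "\<bar>a n - measure_pmf.expectation p a\<bar> \<le> G"
proof -
  have g_nonneg: "0 \<le> g k" for k
    using bound[of k] by linarith
  have int_g: "integrable (measure_pmf p) g"
    using sums_summable[OF sums] g_nonneg by (simp add: integrable_measure_pmf_nat_iff)
  have int_a: "integrable (measure_pmf p) a"
  proof (rule Bochner_Integration.integrable_bound)
    show "integrable (measure_pmf p) (\<lambda>k. g k + \<bar>a n\<bar>)"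
      using int_g by simp
    have "\<bar>a k\<bar> \<le> g k + \<bar>a n\<bar>" for k
      using bound[of k] by linarith
    then show "AE k in measure_pmf p. norm (a k) \<le> norm (g k + \<bar>a n\<bar>)"
      using g_nonneg by (intro AE_I2) (simp add: abs_of_nonneg add_nonneg_nonneg)
  qed simp
  have "a n - measure_pmf.expectation p a = measure_pmf.expectation p (\<lambda>k. a n - a k)"
    using int_a by (simp add: measure_pmf.prob_space)
  also have "\<bar>\<dots>\<bar> \<le> measure_pmf.expectation p (\<lambda>k. \<bar>a k - a n\<bar>)"
    using integral_norm_bound[of "measure_pmf p" "\<lambda>k. a n - a k"] by (simp add: abs_minus_commute)
  also have "\<dots> \<le> measure_pmf.expectation p g"
    using int_a int_g bound by (intro integral_mono) auto
  also have "\<dots> = G"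
    using sums_unique2[OF sums_expectation_measure_pmf_nat[OF int_g] sums] .
  finally show ?thesis .
qed

lemma bigo_imp_le_plus_const:
  fixes f g :: "nat \<Rightarrow> real"
  assumes "f \<in> O(g)"
  obtains K where "K > 0" "\<And>n. \<bar>f n\<bar> \<le> K * (\<bar>g n\<bar> + 1)"
proof -
  obtain c where c: "c > 0" "eventually (\<lambda>n. norm (f n) \<le> c * norm (g n)) at_top"
    using landau_o.bigE[OF assms] by blast
  then obtain N where N: "\<And>n. n \<ge> N \<Longrightarrow> \<bar>f n\<bar> \<le> c * \<bar>g n\<bar>"
    by (auto simp: eventually_at_top_linorder)
  define D where "D = (\<Sum>m<N. \<bar>f m\<bar>)"
  have "D \<ge> 0"
    unfolding D_def by (simp add: sum_nonneg)
  have "\<bar>f n\<bar> \<le> (c + D) * (\<bar>g n\<bar> + 1)" for n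
  proof (cases "n < N")
    case True
    then have "\<bar>f n\<bar> \<le> D"
      unfolding D_def by (intro member_le_sum) auto
    also have "D \<le> (c + D) * 1"
      using c(1) by simp
    also have "\<dots> \<le> (c + D) * (\<bar>g n\<bar> + 1)"
      using c(1) \<open>D \<ge> 0\<close> by (intro mult_left_mono) auto
    finally show ?thesis .
  next
    case False
    then have "\<bar>f n\<bar> \<le> c * \<bar>g n\<bar>"
      by (intro N) simp
    also have "\<dots> \<le> (c + D) * (\<bar>g n\<bar> + 1)"
      using c(1) \<open>D \<ge> 0\<close> by (intro mult_mono) auto
    finally show ?thesis .
  qed
  with c(1) \<open>D \<ge> 0\<close> show ?thesis
    using that[of "c + D"] by simp
qed

lemma abs_diff_le_of_increment_bound:
  fixes a :: "nat \<Rightarrow> real"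
  assumes "m \<le> k" and "\<And>j. m \<le> j \<Longrightarrow> j < k \<Longrightarrow> \<bar>a (Suc j) - a j\<bar> \<le> M"
  shows "\<bar>a k - a m\<bar> \<le> real (k - m) * M"
proof -
  have "\<bar>a k - a m\<bar> = \<bar>\<Sum>j=m..<k. a (Suc j) - a j\<bar>"
    using assms(1) by (simp add: sum_Suc_diff')
  also have "\<dots> \<le> (\<Sum>j=m..<k. \<bar>a (Suc j) - a j\<bar>)"
    by (rule sum_abs)
  also have "\<dots> \<le> real (k - m) * M"
    using sum_bounded_above[of "{m..<k}" "\<lambda>j. \<bar>a (Suc j) - a j\<bar>" M] assms(2) by simp
  finally show ?thesis .
qed

lemma abs_diff_le_of_sqrt_increment_bound:
  fixes a :: "nat \<Rightarrow> real"
  assumes incr: "\<And>m. \<bar>a (Suc m) - a m\<bar> \<le> K * (sqrt (real m) + 1)"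
  shows "\<bar>a k - a n\<bar> \<le> K * ((real k - real n)\<^sup>2 + real k + real n + 1)"
proof -
  have "K \<ge> 0"
    using incr[of 0] by (simp add: zero_le_mult_iff)
  have ordered: "\<bar>a k - a n\<bar> \<le> K * ((real k - real n)\<^sup>2 + real k + real n + 1)"
    if "n \<le> k" for k n
  proof -
    define d where "d = real k - real n"
    have "\<bar>a (Suc j) - a j\<bar> \<le> K * (sqrt (real k) + 1)" if "j < k" for j
    proof -
      have "sqrt (real j) \<le> sqrt (real k)"
        using that by simp
      then have "K * (sqrt (real j) + 1) \<le> K * (sqrt (real k) + 1)"
        using \<open>K \<ge> 0\<close> by (intro mult_left_mono) auto
      then show ?thesis
        using incr[of j] by linarith
    qed
    then have "\<bar>a k - a n\<bar> \<le> d * (K * (sqrt (real k) + 1))"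
      using abs_diff_le_of_increment_bound[OF \<open>n \<le> k\<close>] \<open>n \<le> k\<close> by (simp add: d_def of_nat_diff)
    also have "\<dots> = K * (d * sqrt (real k) + d)"
      by (simp add: algebra_simps)
    also have "\<dots> \<le> K * (d\<^sup>2 + real k + real n + 1)"
    proof (intro mult_left_mono \<open>K \<ge> 0\<close>)
      have "2 * d * sqrt (real k) \<le> d\<^sup>2 + real k"
        using sum_squares_bound[of d "sqrt (real k)"] by simp
      moreover have "2 * d \<le> d\<^sup>2 + 1"
        using sum_squares_bound[of d 1] by simp
      ultimately show "d * sqrt (real k) + d \<le> d\<^sup>2 + real k + real n + 1"
        by simp
    qed
    finally show ?thesis
      by (simp add: d_def)
  qed
  show ?thesis
  proof (cases "n \<le> k")
    case True
    then show ?thesis by (rule ordered)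
  next
    case False
    then show ?thesis
      using ordered[of k n] by (simp add: abs_minus_commute power2_commute add_ac)
  qed
qed

theorem lemma6p8:
  fixes a :: "nat \<Rightarrow> real"
  assumes "(\<lambda>n. a (Suc n) - a n) \<in> O(\<lambda>n. sqrt (real n))"
  shows "(\<lambda>n. \<bar>a n - measure_pmf.expectation (poisson_pmf (real n)) a\<bar>) \<in> O(\<lambda>n. real n)"
proof -
  obtain K where "K > 0" and incr: "\<And>m. \<bar>a (Suc m) - a m\<bar> \<le> K * (sqrt (real m) + 1)"
    using bigo_imp_le_plus_const[OF assms] by auto
  have bound: "\<bar>a n - measure_pmf.expectation (poisson_pmf (real n)) a\<bar> \<le> K * (3 * real n + 1)"
    if "n \<ge> 1" for n
  proof (rule abs_expectation_diff_le[OF abs_diff_le_of_sqrt_increment_bound[OF incr]])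
    let ?p = "pmf (poisson_pmf (real n))"
    have r: "real n > 0"
      using that by simp
    have "(\<lambda>k. K * (?p k * (real k - real n)\<^sup>2 + ?p k * real k + (real n + 1) * ?p k))
            sums (K * (real n + real n + (real n + 1) * 1))"
      by (intro sums_mult sums_add poisson_pmf_variance_sums[OF r] poisson_pmf_mean_sums[OF r]
            poisson_pmf_sums_1[OF r])
    then show "(\<lambda>k. ?p k * (K * ((real k - real n)\<^sup>2 + real k + real n + 1))) sums (K * (3 * real n + 1))"
      by (simp add: algebra_simps)
  qed
  show ?thesis
  proof (rule bigoI[where c = "4 * K"])
    have "\<bar>a n - measure_pmf.expectation (poisson_pmf (real n)) a\<bar> \<le> 4 * K * real n"
      if "n \<ge> 1" for n
    proof -
      have "K * (3 * real n + 1) \<le> 4 * K * real n"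
        using \<open>K > 0\<close> that by simp
      with bound[OF that] show ?thesis
        by linarith
    qed
    then show "eventually (\<lambda>n. norm \<bar>a n - measure_pmf.expectation (poisson_pmf (real n)) a\<bar>
        \<le> 4 * K * norm (real n)) at_top"
      unfolding eventually_at_top_linorder by (intro exI[of _ 1]) simp
  qed
qed

end
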